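(* Let $\Delta\ge 4$ and $n\ge 3$ be integers. There exists a simple hamiltonian graph $G$ on $n$ vertices with maximum degree at most $\Delta$, diameter at most $2\,h(n,\Delta)$, and $$|E(G)|\le \Bigl(2-\frac{1}{\Delta-1}-\frac{(\Delta-2)^2}{(\Delta-1)^3}\Bigr)n+\frac{\Delta-3}{2}+2(\Delta-2).$$
   Context: Put $b=\Delta-1$. The complete $\Delta$-ary tree $T_{n,\Delta}$ is the rooted tree on vertex set $\{1,\dots,n\}$ with root $1$ in which the children of a vertex $i$ are the integers $j$ with $b(i-1)+2\le j\le bi+1$ and $j\le n$. Thus every vertex has at most $\Delta-1$ children, all levels except possibly the last are full, and the last level is filled from the left. The height $h(n,\Delta)$ of $T_{n,\Delta}$ is the largest distance from the root to a vertex. A graph is hamiltonian if it contains a cycle passing through every vertex exactly once; the diameter is the maximum graph distance between two vertices. *)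

theory Defs
  imports Complex_Main
begin

definition simple_graph :: "'a set \<Rightarrow> 'a set set \<Rightarrow> bool" where
  "simple_graph V E \<longleftrightarrow> finite V \<and> (\<forall>e\<in>E. \<exists>u v. u \<in> V \<and> v \<in> V \<and> u \<noteq> v \<and> e = {u, v})"

definition degree :: "'a set set \<Rightarrow> 'a \<Rightarrow> nat" where
  "degree E v = card {e \<in> E. v \<in> e}"

definition is_walk :: "'a set set \<Rightarrow> 'a list \<Rightarrow> bool" where
  "is_walk E xs \<longleftrightarrow> xs \<noteq> [] \<and> (\<forall>i. i + 1 < length xs \<longrightarrow> {xs ! i, xs ! (i + 1)} \<in> E)"

definition gdist :: "'a set set \<Rightarrow> 'a \<Rightarrow> 'a \<Rightarrow> nat" where
  "gdist E u v = (LEAST k. \<exists>xs. is_walk E xs \<and> hd xs = u \<and> last xs = v \<and> length xs = k + 1)"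

definition diameter :: "'a set \<Rightarrow> 'a set set \<Rightarrow> nat" where
  "diameter V E = Max {gdist E u v | u v. u \<in> V \<and> v \<in> V}"

definition hamiltonian :: "'a set \<Rightarrow> 'a set set \<Rightarrow> bool" where
  "hamiltonian V E \<longleftrightarrow> (\<exists>xs. distinct xs \<and> set xs = V \<and> 3 \<le> length xs \<and>
      (\<forall>i < length xs. {xs ! i, xs ! ((i + 1) mod length xs)} \<in> E))"

text \<open>Edges of the complete Delta-ary tree T(n,Delta) on {1..n}, with b = Delta - 1:
  children of i are the j with b(i-1)+2 \<le> j \<le> bi+1 and j \<le> n.\<close>
definition tree_edges :: "nat \<Rightarrow> nat \<Rightarrow> nat set set" where
  "tree_edges n \<Delta> = {{i, j} | i j. 1 \<le> i \<and> i \<le> n \<and>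
      (\<Delta> - 1) * (i - 1) + 2 \<le> j \<and> j \<le> (\<Delta> - 1) * i + 1 \<and> j \<le> n}"

definition tree_height :: "nat \<Rightarrow> nat \<Rightarrow> nat" where
  "tree_height n \<Delta> = Max {gdist (tree_edges n \<Delta>) 1 v | v. v \<in> {1..n}}"

end

theory Submission
  imports Defs
begin

(* Write b = Delta - 1 and number the vertices of the complete Delta-ary tree T(n, Delta) in
   heap order, so that v \<ge> 2 has parent (v - 2) div b + 1.  The graph is T(n, Delta) together
   with a Hamilton cycle obtained from a recursive traversal ("tour") of the tree: consecutive
   vertices of the tour are either adjacent in the tree or both "thin" (at most one child).
   Hence every vertex keeps degree at most Delta, and the tree alone bounds the diameter by
   twice the height.  To count edges, certain vertices are "marked"; an induction over the tour
   shows that every non-tree step of the tour is paid for by a marked vertex, so there are at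
   most n - 1 + (number of marked vertices) edges.  The marked vertices satisfy a block
   recursion showing that they make up a fraction (b-1)/(b+1) of all vertices up to an error
   linear in the number of levels, which is in turn at most (b-1)n/b^3 plus a constant. *)

lemma distinct_concat_map:
  assumes "distinct ks" "\<And>k. k \<in> set ks \<Longrightarrow> distinct (f k) \<and> set (f k) \<subseteq> D k"
    "\<And>x y. x \<in> set ks \<Longrightarrow> y \<in> set ks \<Longrightarrow> x \<noteq> y \<Longrightarrow> D x \<inter> D y = {}"
  shows "distinct (concat (map f ks)) \<and> set (concat (map f ks)) \<subseteq> \<Union> (D ` set ks)"
  using assms
proof (induction ks)
  case (Cons a ks)
  have IH: "distinct (concat (map f ks)) \<and> set (concat (map f ks)) \<subseteq> \<Union> (D ` set ks)"
    using Cons by auto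
  have "a \<notin> set ks" using Cons.prems(1) by simp
  then have "D a \<inter> D y = {}" if "y \<in> set ks" for y
    using Cons.prems(3)[of a y] that by auto
  then have "D a \<inter> \<Union> (D ` set ks) = {}" by blast
  moreover have "set (f a) \<subseteq> D a" using Cons.prems(2) by simp
  ultimately have "set (f a) \<inter> set (concat (map f ks)) = {}" using IH by blast
  then show ?case using IH Cons.prems by auto
qed simp

lemma successively_concat:
  assumes "\<And>x y. T x \<Longrightarrow> T y \<Longrightarrow> R x y"
    and "\<And>xs. xs \<in> set xss \<Longrightarrow> xs \<noteq> [] \<and> successively R xs \<and> T (hd xs) \<and> T (last xs)"
  shows "successively R (concat xss) \<and>
    (xss \<noteq> [] \<longrightarrow> concat xss \<noteq> [] \<and> T (hd (concat xss)) \<and> T (last (concat xss)))"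
  using assms(2)
proof (induction xss)
  case (Cons xs xss)
  then show ?case
    using assms(1) by (cases "xss = []") (auto simp: successively_append_iff)
qed simp

fun breaks :: "('a \<Rightarrow> 'a \<Rightarrow> bool) \<Rightarrow> 'a list \<Rightarrow> nat" where
  "breaks R (x # y # xs) = (if R x y then 0 else 1) + breaks R (y # xs)"
| "breaks R _ = 0"

lemma breaks_Cons: "breaks R (x # xs) = (if xs \<noteq> [] \<and> \<not> R x (hd xs) then 1 else 0) + breaks R xs"
  by (cases xs) auto

lemma breaks_append:
  "breaks R (xs @ ys) =
    breaks R xs + breaks R ys + (if xs \<noteq> [] \<and> ys \<noteq> [] \<and> \<not> R (last xs) (hd ys) then 1 else 0)"
  by (induction xs) (auto simp: breaks_Cons)

lemma breaks_rev: "(\<And>x y. R x y \<longleftrightarrow> R y x) \<Longrightarrow> breaks R (rev xs) = breaks R xs"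
  by (induction xs) (auto simp: breaks_append breaks_Cons hd_rev last_rev)

lemma breaks_concat:
  "breaks R (concat xss) \<le> sum_list (map (breaks R) xss) + (length xss - 1)"
proof (induction xss)
  case (Cons xs xss)
  have "breaks R (concat (xs # xss)) \<le> breaks R xs + breaks R (concat xss) + (if xss = [] then 0 else 1)"
    by (auto simp: breaks_append)
  then show ?case using Cons.IH by (cases xss) auto
qed simp

lemma card_breaks:
  "card {i. Suc i < length xs \<and> \<not> R (xs ! i) (xs ! Suc i)} \<le> breaks R xs"
proof (induction R xs rule: breaks.induct)
  case (1 R x y xs)
  let ?S = "\<lambda>xs. {i. Suc i < length xs \<and> \<not> R (xs ! i) (xs ! Suc i)}"
  have sub: "?S (x # y # xs) \<subseteq> (if R x y then {} else {0}) \<union> Suc ` ?S (y # xs)"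
  proof
    fix i assume i: "i \<in> ?S (x # y # xs)"
    show "i \<in> (if R x y then {} else {0}) \<union> Suc ` ?S (y # xs)"
    proof (cases i)
      case (Suc j)
      then have "j \<in> ?S (y # xs)" using i by auto
      then show ?thesis using Suc by blast
    qed (use i in auto)
  qed
  have fin: "finite (?S (y # xs))" by (rule finite_subset[of _ "{..<length (y # xs)}"]) auto
  have "card (?S (x # y # xs)) \<le> card ((if R x y then {} else {0}) \<union> Suc ` ?S (y # xs))"
    using sub fin by (intro card_mono) auto
  also have "\<dots> \<le> (if R x y then 0 else 1) + card (?S (y # xs))"
    using card_Un_le[of "if R x y then {} else {0::nat}"] card_image_le[OF fin, of Suc] by auto
  finally show ?case using "1.IH" by simp
qed simp_all

section \<open>The complete tree in heap numbering\<close>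

definition parent :: "nat \<Rightarrow> nat \<Rightarrow> nat" where
  "parent b v = (v - 2) div b + 1"

definition children :: "nat \<Rightarrow> nat \<Rightarrow> nat \<Rightarrow> nat list" where
  "children b n v = [b * (v - 1) + 2 ..< min (b * v + 2) (n + 1)]"

lemma children_bounds:
  assumes "x \<in> set (children b n v)"
  shows "b * (v - 1) + 2 \<le> x" "x < b * v + 2" "x \<le> n"
  using assms by (auto simp: children_def)

lemma child_gt: "x \<in> set (children b n v) \<Longrightarrow> v < x"
proof -
  assume x: "x \<in> set (children b n v)"
  show "v < x"
  proof (cases "b = 0")
    case False
    then have "v - 1 \<le> b * (v - 1)" by simp
    then show ?thesis using children_bounds(1)[OF x] by linarith
  qed (use children_bounds[OF x] in auto)
qed

lemma parent_lt: "2 \<le> v \<Longrightarrow> parent b v < v"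
  unfolding parent_def using div_le_dividend[of "v - 2" b] by linarith

lemma parent_ge1: "1 \<le> parent b v"
  by (simp add: parent_def)

lemma parent_le: "1 \<le> v \<Longrightarrow> parent b v \<le> v"
  using parent_lt[of v b] by (cases "v \<ge> 2") (auto simp: parent_def)

lemma parent_mono: "u \<le> v \<Longrightarrow> parent b u \<le> parent b v"
  unfolding parent_def by (simp add: div_le_mono)

lemma div_eq_iff_bounds: "0 < b \<Longrightarrow> (a::nat) div b = q \<longleftrightarrow> b * q \<le> a \<and> a < b * q + b"
  by (metis add.commute div_nat_eqI dividend_less_times_div mult_Suc_right times_div_less_eq_dividend)

lemma children_iff:
  assumes "b \<ge> 1" "1 \<le> v"
  shows "x \<in> set (children b n v) \<longleftrightarrow> 2 \<le> x \<and> x \<le> n \<and> parent b x = v"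
proof -
  have bv: "b * v = b * (v - 1) + b" using assms by (cases v) auto
  have "parent b x = v \<longleftrightarrow> (x - 2) div b = v - 1" using assms by (auto simp: parent_def)
  also have "\<dots> \<longleftrightarrow> b * (v - 1) \<le> x - 2 \<and> x - 2 < b * (v - 1) + b"
    using assms by (simp add: div_eq_iff_bounds)
  finally show ?thesis using bv by (auto simp: children_def)
qed

lemma length_children: "length (children b n v) \<le> b"
proof -
  have "b * v \<le> b * (v - 1) + b" by (cases v) auto
  then have "min (b * v + 2) (n + 1) - (b * (v - 1) + 2) \<le> b" by linarith
  then show ?thesis by (simp only: children_def length_upt)
qed

lemma distinct_children: "distinct (children b n v)"
  by (simp add: children_def)

definition subtree :: "nat \<Rightarrow> nat \<Rightarrow> nat \<Rightarrow> nat set" where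
  "subtree b n v = {u. 1 \<le> u \<and> u \<le> n \<and> (\<exists>j. (parent b ^^ j) u = v)}"

lemma funpow_parent_le: "1 \<le> u \<Longrightarrow> (parent b ^^ j) u \<le> u"
proof (induction j)
  case (Suc j)
  then show ?case using parent_le[of "(parent b ^^ j) u" b] parent_ge1[of b]
    by (cases j) auto
qed simp

lemma subtree_ge: "u \<in> subtree b n v \<Longrightarrow> v \<le> u"
  unfolding subtree_def using funpow_parent_le by blast

lemma subtree_self: "1 \<le> v \<Longrightarrow> v \<le> n \<Longrightarrow> v \<in> subtree b n v"
  unfolding subtree_def by (auto intro: exI[of _ 0])

lemma subtree_bounded: "subtree b n v \<subseteq> {1..n}"
  unfolding subtree_def by auto

lemma subtree_child:
  assumes "b \<ge> 1" "1 \<le> v" "x \<in> set (children b n v)"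
  shows "subtree b n x \<subseteq> subtree b n v"
proof
  fix u assume "u \<in> subtree b n x"
  then obtain j where j: "1 \<le> u" "u \<le> n" "(parent b ^^ j) u = x" unfolding subtree_def by auto
  have "parent b x = v" using children_iff[OF assms(1,2)] assms(3) by auto
  then have "(parent b ^^ Suc j) u = v" using j by simp
  then show "u \<in> subtree b n v" using j unfolding subtree_def by blast
qed

text \<open>Subtrees of distinct children are disjoint: if the parent chain of a common vertex met
  x before y, it would continue from v = parent x, and from there it never exceeds v < y.\<close>
lemma subtree_disjoint:
  assumes "b \<ge> 1" "1 \<le> v" "x \<in> set (children b n v)" "y \<in> set (children b n v)" "x \<noteq> y"
  shows "subtree b n x \<inter> subtree b n y = {}"
proof (rule ccontr)
  assume "subtree b n x \<inter> subtree b n y \<noteq> {}"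
  then obtain u i j where u: "1 \<le> u" "(parent b ^^ i) u = x" "(parent b ^^ j) u = y"
    unfolding subtree_def by auto
  have child: "parent b z = v \<and> v < z" if "z \<in> set (children b n v)" for z
    using children_iff[OF assms(1,2)] that child_gt[OF that] by auto
  have above: False
    if "(parent b ^^ i) u = p" "(parent b ^^ j) u = q" "i < j" "parent b p = v" "v < q" for p q i j
  proof -
    have "j = (j - Suc i) + Suc i" using that(3) by simp
    then have "q = (parent b ^^ (j - Suc i)) ((parent b ^^ Suc i) u)"
      using that(2) by (metis funpow_add o_apply)
    also have "\<dots> = (parent b ^^ (j - Suc i)) v" using that(1,4) by simp
    also have "\<dots> \<le> v" using funpow_parent_le assms(2) by blast
    finally show False using that(5) by simp
  qed
  show False
    using above[OF u(2,3)] above[OF u(3,2)] child[OF assms(3)] child[OF assms(4)] u assms(5)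
    by (cases i j rule: linorder_cases) auto
qed

section \<open>Tours of subtrees\<close>

definition thin :: "nat \<Rightarrow> nat \<Rightarrow> nat \<Rightarrow> bool" where
  "thin b n x \<longleftrightarrow> length (children b n x) \<le> 1"

definition tree_adj :: "nat \<Rightarrow> nat \<Rightarrow> nat \<Rightarrow> bool" where
  "tree_adj b x y \<longleftrightarrow> (2 \<le> x \<and> parent b x = y) \<or> (2 \<le> y \<and> parent b y = x)"

text \<open>A tour may pass between two consecutive vertices only along a tree edge or between two
  thin vertices; such extra edges keep all degrees within the bound.\<close>
definition tour_step :: "nat \<Rightarrow> nat \<Rightarrow> nat \<Rightarrow> nat \<Rightarrow> bool" where
  "tour_step b n x y \<longleftrightarrow> tree_adj b x y \<or> (thin b n x \<and> thin b n y)"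

lemma tree_adj_sym: "tree_adj b x y \<longleftrightarrow> tree_adj b y x"
  by (auto simp: tree_adj_def)

lemma successively_tour_step_rev:
  "successively (tour_step b n) (rev xs) \<longleftrightarrow> successively (tour_step b n) xs"
proof -
  have "(\<lambda>x y. tour_step b n y x) = tour_step b n"
    by (auto simp: tour_step_def tree_adj_def fun_eq_iff)
  then show ?thesis by (simp only: successively_rev)
qed

lemma child_tree_adj:
  "b \<ge> 1 \<Longrightarrow> 1 \<le> v \<Longrightarrow> k \<in> set (children b n v) \<Longrightarrow> tree_adj b v k \<and> tree_adj b k v"
  using children_iff by (auto simp: tree_adj_def)

lemma child_measure: "x \<in> set (children b n v) \<Longrightarrow> Suc n - x < Suc n - v"
  using child_gt children_bounds(3) by fastforce

text \<open>An open tour (c = False) starts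
  at v; a closed tour (c = True) starts and ends at thin vertices.\<close>
function tour :: "nat \<Rightarrow> nat \<Rightarrow> bool \<Rightarrow> nat \<Rightarrow> nat list" where
  "tour b n c v = (case children b n v of
      [] \<Rightarrow> [v]
    | k # ks \<Rightarrow>
        (if c then rev (tour b n False k) @ v #
           (case ks of [] \<Rightarrow> [] | k' # ks' \<Rightarrow> tour b n False k' @ concat (map (tour b n True) ks'))
         else v # tour b n False k @ concat (map (tour b n True) ks)))"
  by pat_completeness auto
termination
  apply (relation "measure (\<lambda>(b, n, c, v). Suc n - v)")
   apply (auto simp del: One_nat_def)
  apply (metis child_measure list.set_intros)+
  done

declare tour.simps[simp del]

definition forest_tour :: "nat \<Rightarrow> nat \<Rightarrow> nat list \<Rightarrow> nat list" where
  "forest_tour b n ks = (case ks of [] \<Rightarrow> [] | k # ks' \<Rightarrow> tour b n False k @ concat (map (tour b n True) ks'))"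

lemma tour_leaf: "children b n v = [] \<Longrightarrow> tour b n c v = [v]"
  by (simp add: tour.simps)

lemma tour_open: "children b n v = k # ks \<Longrightarrow> tour b n False v = v # forest_tour b n (k # ks)"
  by (simp add: tour.simps forest_tour_def)

lemma tour_closed:
  "children b n v = k # ks \<Longrightarrow> tour b n True v = rev (tour b n False k) @ v # forest_tour b n ks"
  by (simp add: tour.simps forest_tour_def split: list.split)

lemma tour_open_hd: "hd (tour b n False v) = v"
  by (cases "children b n v") (auto simp: tour_leaf tour_open)

lemma tour_nonempty: "tour b n c v \<noteq> []"
  by (cases "children b n v"; cases c) (auto simp: tour_leaf tour_open tour_closed)

lemma forest_tour_nonempty: "forest_tour b n (k # ks) \<noteq> []"
  using tour_nonempty[of b n False k] by (simp add: forest_tour_def)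

lemma forest_tour_hd: "hd (forest_tour b n (k # ks)) = k"
  using tour_nonempty[of b n False k] by (simp add: forest_tour_def tour_open_hd)

lemma subtree_induct:
  assumes "\<And>c v. (\<And>c' x. x \<in> set (children b n v) \<Longrightarrow> P c' x) \<Longrightarrow> P c v"
  shows "P c v"
proof (induction "Suc n - v" arbitrary: c v rule: less_induct)
  case less
  show ?case
  proof (rule assms)
    fix c' x assume x: "x \<in> set (children b n v)"
    have "Suc n - x < Suc n - v" using child_measure[OF x] .
    then show "P c' x" using less by blast
  qed
qed

lemma tour_cases:
  obtains (leaf) "children b n v = []"
    | (open_tour) k ks where "children b n v = k # ks" "\<not> c"
    | (closed_tour) k ks where "children b n v = k # ks" "c"
  by (cases "children b n v") auto

lemma child_of_tour:
  assumes "x \<in> set (children b n v)"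
  shows "\<exists>c'. set (tour b n c' x) \<subseteq> set (tour b n c v)"
proof -
  have in_forest: "\<exists>c'. set (tour b n c' x) \<subseteq> set (forest_tour b n ks)" if "x \<in> set ks" for ks
    using that by (cases ks) (auto simp: forest_tour_def)
  show ?thesis
  proof (cases rule: tour_cases[where b = b and n = n and v = v and c = c])
    case leaf then show ?thesis using assms by simp
  next
    case (open_tour k ks) then show ?thesis using assms in_forest[of "k # ks"] by (fastforce simp: tour_open)
  next
    case (closed_tour k ks) then show ?thesis using assms in_forest[of ks] by (fastforce simp: tour_closed)
  qed
qed

lemma forest_tour_concat:
  "distinct (k # ks) \<Longrightarrow> forest_tour b n (k # ks) = concat (map (\<lambda>x. tour b n (x \<noteq> k) x) (k # ks))"
proof -
  assume dist: "distinct (k # ks)"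
  have "tour b n (x \<noteq> k) x = tour b n True x" if "x \<in> set ks" for x
    using dist that by (metis distinct.simps(2))
  then show ?thesis by (simp add: forest_tour_def cong: map_cong)
qed

lemma forest_tour_distinct:
  assumes "distinct (k # ks)"
    and "\<And>x c. x \<in> set (k # ks) \<Longrightarrow> distinct (tour b n c x) \<and> set (tour b n c x) \<subseteq> D x"
    and "\<And>x y. x \<in> set (k # ks) \<Longrightarrow> y \<in> set (k # ks) \<Longrightarrow> x \<noteq> y \<Longrightarrow> D x \<inter> D y = {}"
  shows "distinct (forest_tour b n (k # ks)) \<and> set (forest_tour b n (k # ks)) \<subseteq> \<Union> (D ` set (k # ks))"
  unfolding forest_tour_concat[OF assms(1)] using assms by (intro distinct_concat_map) blast+

lemma tour_distinct:
  assumes "b \<ge> 1"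
  shows "1 \<le> v \<Longrightarrow> v \<le> n \<Longrightarrow> distinct (tour b n c v) \<and> set (tour b n c v) \<subseteq> subtree b n v"
proof (induction c v rule: subtree_induct[where b = b and n = n])
  case (1 c v)
  let ?D = "subtree b n"
  have child_ok: "distinct (tour b n c' x) \<and> set (tour b n c' x) \<subseteq> ?D x"
    if "x \<in> set (children b n v)" for c' x
    using "1.IH"[OF that] child_gt[OF that] children_bounds(3)[OF that] "1.prems" by auto
  have disjoint: "?D x \<inter> ?D y = {}"
    if "x \<in> set (children b n v)" "y \<in> set (children b n v)" "x \<noteq> y" for x y
    using subtree_disjoint[OF assms "1.prems"(1) that] .
  have forest_ok: "distinct (forest_tour b n ks) \<and> set (forest_tour b n ks) \<subseteq> \<Union> (?D ` set ks)"
    if "set ks \<subseteq> set (children b n v)" "distinct ks" for ks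
  proof (cases ks)
    case (Cons k ks')
    show ?thesis unfolding Cons
    proof (rule forest_tour_distinct)
      show "distinct (k # ks')" using that(2) Cons by simp
      show "distinct (tour b n c' x) \<and> set (tour b n c' x) \<subseteq> ?D x" if "x \<in> set (k # ks')" for x c'
        using child_ok that \<open>set ks \<subseteq> set (children b n v)\<close> Cons by blast
      show "?D x \<inter> ?D y = {}" if "x \<in> set (k # ks')" "y \<in> set (k # ks')" "x \<noteq> y" for x y
        using disjoint that \<open>set ks \<subseteq> set (children b n v)\<close> Cons by blast
    qed
  qed (simp add: forest_tour_def)
  have below: "\<Union> (?D ` set (children b n v)) \<subseteq> ?D v - {v}"
    using subtree_child[OF assms "1.prems"(1)] subtree_ge child_gt by fastforce
  have v_in: "v \<in> ?D v" using subtree_self "1.prems" by blast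
  show ?case
  proof (cases rule: tour_cases[where b = b and n = n and v = v and c = c])
    case leaf then show ?thesis using v_in by (simp add: tour_leaf)
  next
    case (open_tour k ks)
    then show ?thesis
      using forest_ok[of "k # ks"] distinct_children[of b n v] below v_in by (auto simp: tour_open)
  next
    case (closed_tour k ks)
    have dist: "distinct (k # ks)" using closed_tour distinct_children[of b n v] by metis
    have "?D k \<inter> \<Union> (?D ` set ks) = {}" using disjoint closed_tour dist by fastforce
    moreover have "distinct (forest_tour b n ks) \<and> set (forest_tour b n ks) \<subseteq> \<Union> (?D ` set ks)"
      using forest_ok[of ks] closed_tour dist by auto
    moreover have "?D k \<subseteq> ?D v - {v}" "\<Union> (?D ` set ks) \<subseteq> ?D v - {v}"
      using below closed_tour by auto
    ultimately show ?thesis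
      using child_ok[of k False] closed_tour v_in by (simp add: tour_closed) blast
  qed
qed

text \<open>A forest tour inherits the step property from its pieces: the junctions are steps between
  thin vertices, because every closed tour starts and ends at a thin vertex.\<close>
lemma forest_tour_steps:
  assumes "successively (tour_step b n) (tour b n False k)" "thin b n (last (tour b n False k))"
    and "\<And>x. x \<in> set ks \<Longrightarrow> successively (tour_step b n) (tour b n True x) \<and>
      thin b n (hd (tour b n True x)) \<and> thin b n (last (tour b n True x))"
  shows "successively (tour_step b n) (forest_tour b n (k # ks)) \<and>
    thin b n (last (forest_tour b n (k # ks)))"
proof -
  have "successively (tour_step b n) (concat (map (tour b n True) ks)) \<and>
      (map (tour b n True) ks \<noteq> [] \<longrightarrow> concat (map (tour b n True) ks) \<noteq> [] \<and>
        thin b n (hd (concat (map (tour b n True) ks))) \<and>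
        thin b n (last (concat (map (tour b n True) ks))))"
    using assms(3) tour_nonempty
    by (intro successively_concat[where T = "thin b n"]) (auto simp: tour_step_def)
  then show ?thesis
    using assms(1,2) tour_nonempty[of b n False k]
    by (cases "ks = []") (auto simp: forest_tour_def successively_append_iff tour_step_def)
qed

lemma tour_steps:
  assumes "b \<ge> 1"
  shows "1 \<le> v \<Longrightarrow> successively (tour_step b n) (tour b n c v) \<and>
    thin b n (last (tour b n c v)) \<and> (c \<longrightarrow> thin b n (hd (tour b n c v)))"
proof (induction c v rule: subtree_induct[where b = b and n = n])
  case (1 c v)
  have child_ok: "successively (tour_step b n) (tour b n c' x) \<and>
      thin b n (last (tour b n c' x)) \<and> (c' \<longrightarrow> thin b n (hd (tour b n c' x)))"
    if "x \<in> set (children b n v)" for c' x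
    using "1.IH"[OF that] child_gt[OF that] "1.prems" by auto
  have adj: "tour_step b n v x \<and> tour_step b n x v" if "x \<in> set (children b n v)" for x
    using child_tree_adj[OF assms "1.prems" that] by (auto simp: tour_step_def)
  have forest_ok: "successively (tour_step b n) (forest_tour b n (k # ks)) \<and>
      thin b n (last (forest_tour b n (k # ks)))"
    if "set (k # ks) \<subseteq> set (children b n v)" for k ks
    using that child_ok by (intro forest_tour_steps) auto
  show ?case
  proof (cases rule: tour_cases[where b = b and n = n and v = v and c = c])
    case leaf then show ?thesis by (simp add: tour_leaf thin_def)
  next
    case (open_tour k ks)
    then show ?thesis using forest_ok[of k ks] adj[of k] forest_tour_nonempty[of b n k ks]
      by (auto simp: tour_open successively_Cons forest_tour_hd)
  next
    case (closed_tour k ks)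
    let ?T = "tour b n False k" and ?F = "forest_tour b n ks"
    have T: "successively (tour_step b n) (rev ?T)" "last (rev ?T) = k" "thin b n (hd (rev ?T))"
      "rev ?T \<noteq> []"
      using closed_tour child_ok[of k False] tour_open_hd[of b n k] tour_nonempty[of b n False k]
      by (auto simp: successively_tour_step_rev hd_rev last_rev simp del: successively_rev)
    have vF: "successively (tour_step b n) (v # ?F) \<and> thin b n (last (v # ?F))"
    proof (cases ks)
      case Nil then show ?thesis using closed_tour by (simp add: forest_tour_def thin_def)
    next
      case (Cons k' ks')
      then show ?thesis using forest_ok[of k' ks'] adj[of k'] closed_tour forest_tour_nonempty[of b n k' ks']
        by (auto simp: successively_Cons forest_tour_hd)
    qed
    show ?thesis using T vF adj[of k] closed_tour
      by (auto simp: tour_closed successively_append_iff)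
  qed
qed

section \<open>Counting the non-tree steps of a tour\<close>

text \<open>Marked vertices: the root, and for every vertex v all children except the first, where
  the second child is marked only if v is not.  Each non-tree step of a tour will be charged to
  a marked vertex of that tour.\<close>
function marked :: "nat \<Rightarrow> nat \<Rightarrow> bool" where
  "marked b v = (if v \<le> 1 then True
     else 2 \<le> (v - 2) mod b \<or> ((v - 2) mod b = 1 \<and> \<not> marked b (parent b v)))"
  by auto
termination
  by (relation "measure snd") (auto intro: parent_lt)

declare marked.simps[simp del]

lemma marked_root: "marked b 1"
  by (simp add: marked.simps)

lemma marked_child:
  assumes "b \<ge> 1" "1 \<le> v" "x \<in> set (children b n v)"
  shows "marked b x \<longleftrightarrow>
    2 \<le> x - (b * (v - 1) + 2) \<or> (x - (b * (v - 1) + 2) = 1 \<and> \<not> marked b v)"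
proof -
  have x: "b * (v - 1) + 2 \<le> x" "x < b * v + 2" using children_bounds[OF assms(3)] by auto
  have "b * v = b * (v - 1) + b" using assms by (cases v) auto
  then have "x - (b * (v - 1) + 2) < b" using x by linarith
  moreover have "x - 2 = b * (v - 1) + (x - (b * (v - 1) + 2))" using x by simp
  ultimately have "(x - 2) mod b = x - (b * (v - 1) + 2)" by simp
  moreover have "parent b x = v" using children_iff[OF assms(1,2)] assms(3) by auto
  ultimately show ?thesis using x by (subst marked.simps) simp
qed

lemma children_marks:
  assumes "b \<ge> 1" "1 \<le> v" "children b n v = k # ks"
  shows "\<not> marked b k"
    and "ks = k' # ks' \<Longrightarrow> (marked b k' \<longleftrightarrow> \<not> marked b v) \<and> (\<forall>x\<in>set ks'. marked b x)"
proof -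
  let ?a = "b * (v - 1) + 2" and ?m = "min (b * v + 2) (n + 1)"
  have "[?a ..< ?m] = k # ks" using assms(3) by (simp only: children_def)
  note first = upt_eq_Cons_conv[THEN iffD1, OF this, THEN conjunct2]
  have k: "k = ?a" and ks: "ks = [?a + 1 ..< ?m]"
    using first[THEN conjunct1, symmetric] first[THEN conjunct2, symmetric] .
  have kin: "k \<in> set (children b n v)" using assms(3) by simp
  show "\<not> marked b k" using marked_child[OF assms(1,2) kin] k by simp
  assume ks': "ks = k' # ks'"
  then have "[?a + 1 ..< ?m] = k' # ks'" using ks by (simp del: upt_Suc)
  note second = upt_eq_Cons_conv[THEN iffD1, OF this, THEN conjunct2]
  have k': "k' = ?a + 1" and rest: "ks' = [?a + 1 + 1 ..< ?m]"
    using second[THEN conjunct1, symmetric] second[THEN conjunct2, symmetric] .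
  have "marked b x" if "x \<in> set ks'" for x
  proof -
    have "x \<in> set (children b n v)" using that assms(3) ks' by simp
    moreover have "2 \<le> x - ?a" using that rest by (auto simp del: upt_Suc)
    ultimately show ?thesis using marked_child[OF assms(1,2)] by blast
  qed
  moreover have "k' \<in> set (children b n v)" using assms(3) ks' by simp
  ultimately show "(marked b k' \<longleftrightarrow> \<not> marked b v) \<and> (\<forall>x\<in>set ks'. marked b x)"
    using marked_child[OF assms(1,2)] k' by auto
qed

definition marks :: "nat \<Rightarrow> nat list \<Rightarrow> nat" where
  "marks b xs = length (filter (marked b) xs)"

lemma marks_simps [simp]:
  "marks b [] = 0"
  "marks b (x # xs) = (if marked b x then 1 else 0) + marks b xs"
  "marks b (xs @ ys) = marks b xs + marks b ys"
  "marks b (rev xs) = marks b xs"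
  by (simp_all add: marks_def flip: rev_filter)

lemma marks_concat: "marks b (concat xss) = sum_list (map (marks b) xss)"
  by (induction xss) auto

text \<open>If the open tour of the first child and the closed tours of the others pay for their own
  breaks, the closed tours with one unit to spare, then the forest tour pays for all its breaks,
  since joining the pieces creates at most one break per closed tour.\<close>
lemma forest_tour_breaks:
  assumes "breaks (tree_adj b) (tour b n False k) \<le> marks b (tour b n False k)"
    and "\<And>x. x \<in> set ks \<Longrightarrow> breaks (tree_adj b) (tour b n True x) + 1 \<le> marks b (tour b n True x)"
  shows "breaks (tree_adj b) (forest_tour b n (k # ks)) \<le> marks b (forest_tour b n (k # ks))"
proof -
  let ?B = "breaks (tree_adj b)" and ?xss = "tour b n False k # map (tour b n True) ks"
  have "?B (forest_tour b n (k # ks)) \<le> sum_list (map ?B ?xss) + length ks"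
    using breaks_concat[of "tree_adj b" ?xss] by (simp add: forest_tour_def)
  also have "\<dots> = ?B (tour b n False k) + sum_list (map (\<lambda>x. ?B (tour b n True x) + 1) ks)"
    by (induction ks) auto
  also have "\<dots> \<le> marks b (tour b n False k) + sum_list (map (\<lambda>x. marks b (tour b n True x)) ks)"
    using assms by (intro add_mono sum_list_mono) auto
  also have "\<dots> = marks b (forest_tour b n (k # ks))"
    by (simp add: forest_tour_def marks_concat o_def)
  finally show ?thesis .
qed

lemma tour_breaks:
  assumes "b \<ge> 1"
  shows "1 \<le> v \<Longrightarrow> (c \<longleftrightarrow> marked b v) \<Longrightarrow>
    breaks (tree_adj b) (tour b n c v) + (if c then 1 else 0) \<le> marks b (tour b n c v)"
proof (induction c v rule: subtree_induct[where b = b and n = n])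
  case (1 c v)
  let ?B = "breaks (tree_adj b)"
  have IH: "?B (tour b n c' x) + (if c' then 1 else 0) \<le> marks b (tour b n c' x)"
    if "x \<in> set (children b n v)" "c' \<longleftrightarrow> marked b x" for c' x
    using "1.IH"[OF that(1)] child_gt[OF that(1)] that(2) by auto
  have adj: "tree_adj b v x \<and> tree_adj b x v" if "x \<in> set (children b n v)" for x
    using child_tree_adj[OF assms "1.prems"(1) that] .
  have forest_ok: "?B (forest_tour b n (k # ks)) \<le> marks b (forest_tour b n (k # ks))"
    if "set (k # ks) \<subseteq> set (children b n v)" "\<not> marked b k" "\<forall>x\<in>set ks. marked b x" for k ks
    using that by (intro forest_tour_breaks) (auto intro: IH[where c' = True, simplified] IH[where c' = False, simplified])
  show ?case
  proof (cases rule: tour_cases[where b = b and n = n and v = v and c = c])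
    case leaf then show ?thesis using "1.prems" by (simp add: tour_leaf)
  next
    case (open_tour k ks)
    note marks = children_marks[OF assms "1.prems"(1) open_tour(1)]
    have "\<forall>x\<in>set ks. marked b x" using marks(2) open_tour "1.prems"(2) by (cases ks) auto
    then have "?B (forest_tour b n (k # ks)) \<le> marks b (forest_tour b n (k # ks))"
      using forest_ok[of k ks] marks(1) open_tour by simp
    then show ?thesis using adj[of k] open_tour forest_tour_nonempty[of b n k ks]
      by (simp add: tour_open breaks_Cons forest_tour_hd)
  next
    case (closed_tour k ks)
    note marks = children_marks[OF assms "1.prems"(1) closed_tour(1)]
    let ?T = "tour b n False k" and ?F = "forest_tour b n ks"
    have T: "?B ?T \<le> marks b ?T" using IH[of k False] marks(1) closed_tour by simp
    have F: "?B (v # ?F) \<le> marks b ?F"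
    proof (cases ks)
      case (Cons k' ks')
      then have "?B ?F \<le> marks b ?F"
        using forest_ok[of k' ks'] marks(2)[OF Cons] closed_tour "1.prems"(2) by auto
      then show ?thesis using adj[of k'] Cons closed_tour forest_tour_nonempty[of b n k' ks']
        by (simp add: breaks_Cons forest_tour_hd)
    qed (simp add: forest_tour_def)
    have "?B (tour b n c v) = ?B ?T + ?B (v # ?F)"
      using adj[of k] closed_tour tour_nonempty[of b n False k] tour_open_hd[of b n k]
      by (simp add: tour_closed breaks_append breaks_rev tree_adj_sym last_rev)
    then show ?thesis using T F closed_tour "1.prems"(2) by (simp add: tour_closed)
  qed
qed

section \<open>How many vertices are marked\<close>

definition marked_count :: "nat \<Rightarrow> nat \<Rightarrow> nat" where
  "marked_count b n = card {u \<in> {1..n}. marked b u}"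

lemma marked_count_Suc:
  "marked_count b (Suc n) = marked_count b n + (if marked b (Suc n) then 1 else 0)"
proof -
  have "{u \<in> {1..Suc n}. marked b u} = {u \<in> {1..n}. marked b u} \<union> (if marked b (Suc n) then {Suc n} else {})"
    by (auto simp: le_Suc_eq)
  then show ?thesis by (simp add: marked_count_def card_insert_if)
qed

lemma marked_count_0 [simp]: "marked_count b 0 = 0"
  by (simp add: marked_count_def)

lemma marked_count_1: "marked_count b 1 = 1"
proof -
  have "{u \<in> {1..1}. marked b u} = {1}" using marked_root by auto
  then show ?thesis by (simp add: marked_count_def)
qed

text \<open>The vertices 2 + bm + i, i < b, are the children of m + 1, at position i.\<close>
lemma marked_in_block:
  assumes "i < b"
  shows "marked b (b * m + 2 + i) \<longleftrightarrow> 2 \<le> i \<or> (i = 1 \<and> \<not> marked b (m + 1))"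
proof -
  have "(b * m + 2 + i - 2) mod b = i" "parent b (b * m + 2 + i) = m + 1"
    using assms by (simp_all add: parent_def)
  then show ?thesis by (subst marked.simps) simp
qed

lemma marked_count_partial_block:
  assumes "r \<le> b"
  shows "marked_count b (1 + b * m + r) =
    marked_count b (1 + b * m) + (if r \<le> 1 then 0 else r - 2 + (if marked b (m + 1) then 0 else 1))"
  using assms
proof (induction r)
  case (Suc r)
  have "marked b (Suc (1 + b * m + r)) \<longleftrightarrow> 2 \<le> r \<or> (r = 1 \<and> \<not> marked b (m + 1))"
    using marked_in_block[of r b m] Suc.prems by (simp add: add.commute add.left_commute)
  then show ?case using Suc by (auto simp: marked_count_Suc)
qed simp

text \<open>Every complete block of b siblings contains b - 2 marked vertices, plus one more if the
  parent is unmarked; this gives a recursion for the number of marked vertices.\<close>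
lemma marked_count_blocks:
  assumes "b \<ge> 2"
  shows "int (marked_count b (1 + b * m)) = 1 + (int b - 1) * int m - int (marked_count b m)"
proof (induction m)
  case 0 then show ?case using marked_count_1[of b] by simp
next
  case (Suc m)
  have "marked_count b (1 + b * Suc m) = marked_count b (1 + b * m + b)" by (simp add: algebra_simps)
  also have "\<dots> = marked_count b (1 + b * m) + (b - 2 + (if marked b (m + 1) then 0 else 1))"
    using marked_count_partial_block[of b b m] assms by simp
  finally show ?case using Suc assms by (auto simp: marked_count_Suc of_nat_diff algebra_simps)
qed

text \<open>The deviation of the number of marked vertices from its average share (b-1)/(b+1).\<close>
definition marked_excess :: "nat \<Rightarrow> nat \<Rightarrow> int" where
  "marked_excess b n = (int b + 1) * int (marked_count b n) - (int b - 1) * int n"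

lemma marked_excess_step:
  assumes "b \<ge> 3" "n = 1 + b * m + r" "r < b"
  shows "\<bar>marked_excess b n + marked_excess b m\<bar> \<le> 2 * int b - 4"
proof -
  define g :: int where "g = (if r \<le> 1 then 0 else int r - 2 + (if marked b (m + 1) then 0 else 1))"
  have "int (marked_count b n) = int (marked_count b (1 + b * m)) + g"
    using marked_count_partial_block[of r b m] assms unfolding g_def by (auto simp: of_nat_diff)
  then have F: "int (marked_count b n) = 1 + (int b - 1) * int m - int (marked_count b m) + g"
    using marked_count_blocks[of b m] assms(1) by simp
  have N: "int n = 1 + int b * int m + int r" using assms(2) by simp
  have "marked_excess b n + marked_excess b m =
      (int b + 1) * (1 + (int b - 1) * int m - int (marked_count b m) + g)
      - (int b - 1) * (1 + int b * int m + int r)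
      + (int b + 1) * int (marked_count b m) - (int b - 1) * int m"
    by (simp only: marked_excess_def F N)
  also have "\<dots> = 2 + (int b + 1) * g - (int b - 1) * int r"
    by (simp add: algebra_simps)
  also have "\<bar>\<dots>\<bar> \<le> 2 * int b - 4"
  proof (cases "r \<le> 1")
    case True
    then have "r = 0 \<or> r = 1" by auto
    then show ?thesis using assms(1) unfolding g_def by auto
  next
    case False
    then show ?thesis
      using assms(1,3) unfolding g_def by (cases "marked b (m + 1)") (auto simp: algebra_simps)
  qed
  finally show ?thesis .
qed

function levels :: "nat \<Rightarrow> nat \<Rightarrow> nat" where
  "levels b n = (if n \<le> 1 then 0 else 1 + levels b ((n - 1) div b))"
  by auto
termination
  by (relation "measure snd") (auto intro: le_less_trans[OF div_le_dividend])

declare levels.simps[simp del]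


lemma marked_excess_bound:
  assumes "b \<ge> 3"
  shows "\<bar>marked_excess b n\<bar> \<le> (2 * int b - 4) * int (levels b n) + 2"
proof (induction n rule: less_induct)
  case (less n)
  show ?case
  proof (cases "n \<le> 1")
    case True
    then have "n = 0 \<or> n = 1" by auto
    moreover have "levels b n = 0" using True by (simp add: levels.simps)
    ultimately show ?thesis using marked_count_1[of b] by (auto simp: marked_excess_def)
  next
    case False
    define m where "m = (n - 1) div b"
    have n: "n = 1 + b * m + (n - 1) mod b" using False unfolding m_def by simp
    moreover have "m \<le> b * m" using assms by simp
    ultimately have "m < n" by linarith
    then have IH: "\<bar>marked_excess b m\<bar> \<le> (2 * int b - 4) * int (levels b m) + 2"
      using less.IH by blast
    have "levels b n = 1 + levels b m" using False by (subst levels.simps) (simp add: m_def)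
    then have L: "(2 * int b - 4) * int (levels b n) = (2 * int b - 4) + (2 * int b - 4) * int (levels b m)"
      by (simp add: algebra_simps)
    have "\<bar>marked_excess b n\<bar> \<le> \<bar>marked_excess b n + marked_excess b m\<bar> + \<bar>marked_excess b m\<bar>"
      using abs_triangle_ineq4[of "marked_excess b n + marked_excess b m" "marked_excess b m"] by simp
    moreover have "(n - 1) mod b < b" using assms by simp
    ultimately show ?thesis using marked_excess_step[OF assms n] IH L by linarith
  qed
qed

lemma levels_Suc_le: "Suc k \<le> levels b m \<Longrightarrow> 2 \<le> m \<and> k \<le> levels b ((m - 1) div b)"
proof -
  assume k: "Suc k \<le> levels b m"
  then have "\<not> m \<le> 1" by (auto simp: levels.simps)
  moreover from this have "levels b m = 1 + levels b ((m - 1) div b)" by (subst levels.simps) simp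
  ultimately show ?thesis using k by auto
qed

lemma le_div_pred: "(q::nat) \<le> (m - 1) div b \<Longrightarrow> 1 \<le> m \<Longrightarrow> b * q + 1 \<le> m"
  by (metis le_diff_conv2 le_trans mult_le_mono2 times_div_less_eq_dividend)

lemma levels_ge_3: "3 \<le> levels b m \<Longrightarrow> 2 * b^2 + b + 1 \<le> m"
proof -
  assume "3 \<le> levels b m"
  then have m: "2 \<le> m" "2 \<le> levels b ((m - 1) div b)" using levels_Suc_le[of 2 b m] by auto
  define m1 where "m1 = (m - 1) div b"
  have m1: "2 \<le> m1" "1 \<le> levels b ((m1 - 1) div b)" using levels_Suc_le[of 1 b m1] m m1_def by auto
  have "2 \<le> (m1 - 1) div b" using levels_Suc_le[of 0 b "(m1 - 1) div b"] m1 by auto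
  then have "b * 2 + 1 \<le> m1" using le_div_pred[of 2 m1 b] m1 by simp
  then have "b * (2 * b + 1) + 1 \<le> m" using le_div_pred[of "2 * b + 1" m b] m m1_def by simp
  then show ?thesis by (simp add: power2_eq_square algebra_simps)
qed

lemma level_budget_step:
  fixes B M N :: real
  assumes B: "B \<ge> 3" and M: "M \<ge> 2 * B^2 + B + 1" and N: "B * M + 1 \<le> N"
  shows "2 * B - 4 \<le> (B - 1) * N / B^3 - (B - 1) * M / B^3"
proof -
  have "(B - 1)^2 * (2 * B^2 + B + 1) \<le> (B - 1)^2 * M" using M by (intro mult_left_mono) auto
  moreover have "(B - 1)^2 * (2 * B^2 + B + 1) = (2 * B - 4) * B^3 + (B^3 - B) + B^2 + 1"
    by (simp add: algebra_simps power2_eq_square power3_eq_cube)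
  moreover have "B \<le> B^3"
  proof -
    have "1 * 1 \<le> B * B" using B by (intro mult_mono) auto
    then have "B * 1 \<le> B * (B * B)" using B by (intro mult_left_mono) auto
    then show ?thesis by (simp add: power3_eq_cube)
  qed
  moreover have "(B - 1)^2 * M \<le> (B - 1) * (N - M)"
  proof -
    have "(B - 1) * M \<le> N - M" using N by (simp add: algebra_simps)
    then have "(B - 1) * ((B - 1) * M) \<le> (B - 1) * (N - M)" using B by (intro mult_left_mono) auto
    then show ?thesis by (simp add: power2_eq_square algebra_simps)
  qed
  moreover have "0 \<le> B^2" by simp
  ultimately have "(2 * B - 4) * B^3 \<le> (B - 1) * (N - M)" by linarith
  moreover have "B^3 > 0" using B by simp
  ultimately have "2 * B - 4 \<le> (B - 1) * (N - M) / B^3" by (simp add: pos_le_divide_eq)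
  then show ?thesis by (simp add: right_diff_distrib diff_divide_distrib)
qed

lemma levels_bound:
  assumes "b \<ge> 3"
  shows "(2 * real b - 4) * real (levels b n) \<le> (real b - 1) * real n / real b^3 + (5 * real b - 6) * (real b + 1) / 2"
proof (induction n rule: less_induct)
  case (less n)
  have const: "3 * (2 * real b - 4) \<le> (5 * real b - 6) * (real b + 1) / 2"
  proof -
    have "real b * (5 * real b - 13) \<ge> 0" using assms by simp
    then show ?thesis by (simp add: algebra_simps)
  qed
  show ?case
  proof (cases "levels b n \<le> 3")
    case True
    have "(2 * real b - 4) * real (levels b n) \<le> (2 * real b - 4) * 3"
      using True assms by (intro mult_left_mono) auto
    moreover have "(real b - 1) * real n / real b^3 \<ge> 0" using assms by simp
    ultimately show ?thesis using const by linarith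
  next
    case False
    then have n: "2 \<le> n" using levels_Suc_le[of 3 b n] by simp
    define m where "m = (n - 1) div b"
    have L: "levels b n = 1 + levels b m" using n by (subst levels.simps) (simp add: m_def)
    then have "2 * b^2 + b + 1 \<le> m" using levels_ge_3 False by simp
    then have "real (2 * b^2 + b + 1) \<le> real m" by (simp only: of_nat_le_iff)
    then have M: "2 * real b^2 + real b + 1 \<le> real m" by simp
    have nm: "b * m + 1 \<le> n" using le_div_pred[of m n b] n m_def by simp
    then have "real (b * m + 1) \<le> real n" by (simp only: of_nat_le_iff)
    then have N: "real b * real m + 1 \<le> real n" by simp
    have "m \<le> b * m" using assms by simp
    then have "m < n" using nm by linarith
    then have IH: "(2 * real b - 4) * real (levels b m) \<le> (real b - 1) * real m / real b^3 + (5 * real b - 6) * (real b + 1) / 2"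
      using less.IH by blast
    have "(2 * real b - 4) * real (levels b n) = (2 * real b - 4) + (2 * real b - 4) * real (levels b m)"
      using L by (simp add: algebra_simps)
    then show ?thesis using IH level_budget_step[of "real b" "real m" "real n"] assms M N by simp
  qed
qed

section \<open>The graph: tree edges plus the Hamilton cycle given by the closed root tour\<close>

locale tour_construction =
  fixes b n :: nat
  assumes b3: "b \<ge> 3" and n3: "n \<ge> 3"
begin

abbreviation cyc :: "nat list" where
  "cyc \<equiv> tour b n True 1"

definition parent_edges :: "nat set set" where
  "parent_edges = (\<lambda>j. {parent b j, j}) ` {2..n}"

definition cycle_edges :: "nat set set" where
  "cycle_edges = (\<lambda>i. {cyc ! i, cyc ! ((i + 1) mod n)}) ` {..<n}"

definition graph_edges :: "nat set set" where
  "graph_edges = parent_edges \<union> cycle_edges"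

lemma b1: "b \<ge> 1"
  using b3 by simp

lemma cyc_distinct: "distinct cyc"
  using tour_distinct[OF b1, of 1 n True] n3 by simp

lemma cyc_covers: "1 \<le> u \<Longrightarrow> u \<le> n \<Longrightarrow> \<exists>c. set (tour b n c u) \<subseteq> set cyc"
proof (induction u rule: less_induct)
  case (less u)
  show ?case
  proof (cases "u = 1")
    case False
    then have u: "2 \<le> u" using less by simp
    have p: "parent b u < u" "1 \<le> parent b u" using parent_lt[OF u] parent_ge1 by auto
    then obtain c where c: "set (tour b n c (parent b u)) \<subseteq> set cyc"
      using less.IH less.prems by fastforce
    have "u \<in> set (children b n (parent b u))" using children_iff[OF b1 p(2)] u less.prems by simp
    then obtain c' where "set (tour b n c' u) \<subseteq> set (tour b n c (parent b u))"
      using child_of_tour by blast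
    then show ?thesis using c by blast
  qed blast
qed

lemma cyc_set: "set cyc = {1..n}"
proof
  show "set cyc \<subseteq> {1..n}" using tour_distinct[OF b1, of 1 n True] subtree_bounded n3 by fastforce
  show "{1..n} \<subseteq> set cyc"
  proof
    fix u assume "u \<in> {1..n}"
    then obtain c where "set (tour b n c u) \<subseteq> set cyc" using cyc_covers by auto
    moreover have "u \<in> set (tour b n c u)"
      by (cases c; cases "children b n u") (auto simp: tour_leaf tour_open tour_closed)
    ultimately show "u \<in> set cyc" by blast
  qed
qed

lemma cyc_length: "length cyc = n"
  using distinct_card[OF cyc_distinct] cyc_set by simp

lemma cyc_nth: "i < n \<Longrightarrow> cyc ! i \<in> {1..n}"
  using cyc_set cyc_length nth_mem by metis

lemma cycle_step: "i < n \<Longrightarrow> tour_step b n (cyc ! i) (cyc ! ((i + 1) mod n))"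
proof -
  assume i: "i < n"
  have steps: "successively (tour_step b n) cyc" "thin b n (last cyc)" "thin b n (hd cyc)"
    using tour_steps[OF b1, of 1 n True] by auto
  show ?thesis
  proof (cases "i + 1 < n")
    case True
    then show ?thesis using successively_nth[OF steps(1)] cyc_length by simp
  next
    case False
    then have "i + 1 = n" using i by simp
    then have "i = n - 1" "(i + 1) mod n = 0" by auto
    then have "cyc ! i = last cyc" "cyc ! ((i + 1) mod n) = hd cyc"
      using tour_nonempty[of b n True 1] cyc_length by (simp_all add: last_conv_nth hd_conv_nth)
    then show ?thesis using steps by (simp add: tour_step_def)
  qed
qed

lemma tree_adj_parent_edge:
  assumes "tree_adj b x y" "x \<in> {1..n}" "y \<in> {1..n}"
  shows "{x, y} \<in> parent_edges"
  using assms unfolding tree_adj_def parent_edges_def by (auto simp: insert_commute)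

end

context tour_construction
begin

lemma card_parent_edges: "card parent_edges \<le> n - 1"
  using card_image_le[of "{2..n}" "\<lambda>j. {parent b j, j}"] by (simp add: parent_edges_def)

lemma parent_edges_at:
  assumes "v \<in> {1..n}"
  shows "card {e \<in> parent_edges. v \<in> e} \<le> 1 + length (children b n v)"
proof -
  have "{e \<in> parent_edges. v \<in> e} \<subseteq> insert {parent b v, v} ((\<lambda>k. {v, k}) ` set (children b n v))"
  proof
    fix e assume "e \<in> {e \<in> parent_edges. v \<in> e}"
    then obtain j where j: "j \<in> {2..n}" "e = {parent b j, j}" "v \<in> e"
      unfolding parent_edges_def by auto
    show "e \<in> insert {parent b v, v} ((\<lambda>k. {v, k}) ` set (children b n v))"
    proof (cases "v = j")
      case False
      then have "v = parent b j" using j by auto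
      then have "j \<in> set (children b n v)" using children_iff[OF b1 parent_ge1] j by simp
      then show ?thesis using j \<open>v = parent b j\<close> by auto
    qed (use j in simp)
  qed
  then have "card {e \<in> parent_edges. v \<in> e} \<le> card (insert {parent b v, v} ((\<lambda>k. {v, k}) ` set (children b n v)))"
    by (intro card_mono) simp_all
  also have "\<dots> \<le> Suc (card ((\<lambda>k. {v, k}) ` set (children b n v)))"
    by (simp add: card_insert_if)
  also have "\<dots> \<le> Suc (card (set (children b n v)))"
    using card_image_le[of "set (children b n v)" "\<lambda>k. {v, k}"] by simp
  also have "\<dots> \<le> 1 + length (children b n v)" using card_length by simp
  finally show ?thesis .
qed

lemma cycle_edges_at:
  assumes "v \<in> {1..n}"
  shows "card {e \<in> cycle_edges. v \<in> e} \<le> 2"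
proof -
  obtain j where j: "j < n" "cyc ! j = v" using assms cyc_set cyc_length by (metis in_set_conv_nth)
  define j' where "j' = (j + n - 1) mod n"
  have index: "i = j \<or> i = j'" if "i < n" "v \<in> {cyc ! i, cyc ! ((i + 1) mod n)}" for i
  proof (cases "cyc ! i = v")
    case True
    then show ?thesis using nth_eq_iff_index_eq[OF cyc_distinct] that j cyc_length by auto
  next
    case False
    then have "cyc ! ((i + 1) mod n) = v" using that by auto
    then have "(i + 1) mod n = j"
      using nth_eq_iff_index_eq[OF cyc_distinct, of "(i + 1) mod n" j] j cyc_length n3 by simp
    then have "i = j'" using that(1) n3 unfolding j'_def
      by (cases "i + 1 < n") (auto simp: mod_if)
    then show ?thesis ..
  qed
  have "{e \<in> cycle_edges. v \<in> e} \<subseteq> {{cyc ! j, cyc ! ((j + 1) mod n)}, {cyc ! j', cyc ! ((j' + 1) mod n)}}"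
    using index unfolding cycle_edges_def by auto
  then have "card {e \<in> cycle_edges. v \<in> e} \<le> card {{cyc ! j, cyc ! ((j + 1) mod n)}, {cyc ! j', cyc ! ((j' + 1) mod n)}}"
    by (intro card_mono) auto
  also have "\<dots> \<le> 2" by (simp add: card_insert_if)
  finally show ?thesis .
qed

lemma cycle_edges_at_non_thin:
  assumes "v \<in> {1..n}" "\<not> thin b n v"
  shows "{e \<in> cycle_edges. v \<in> e} \<subseteq> parent_edges"
proof
  fix e assume "e \<in> {e \<in> cycle_edges. v \<in> e}"
  then obtain i where i: "i < n" "e = {cyc ! i, cyc ! ((i + 1) mod n)}" "v \<in> e"
    unfolding cycle_edges_def by auto
  then have "tree_adj b (cyc ! i) (cyc ! ((i + 1) mod n))"
    using cycle_step[OF i(1)] assms(2) unfolding tour_step_def by auto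
  moreover have "(i + 1) mod n < n" using n3 by simp
  ultimately show "e \<in> parent_edges" using tree_adj_parent_edge cyc_nth i by simp
qed

text \<open>Thin vertices have degree at most 2 + 2; the others keep their tree degree b + 1.\<close>
lemma degree_bound:
  assumes "v \<in> {1..n}"
  shows "degree graph_edges v \<le> b + 1"
proof -
  have split: "{e \<in> graph_edges. v \<in> e} = {e \<in> parent_edges. v \<in> e} \<union> {e \<in> cycle_edges. v \<in> e}"
    by (auto simp: graph_edges_def)
  show ?thesis
  proof (cases "thin b n v")
    case True
    have "degree graph_edges v \<le> card {e \<in> parent_edges. v \<in> e} + card {e \<in> cycle_edges. v \<in> e}"
      unfolding degree_def split by (rule card_Un_le)
    also have "\<dots> \<le> (1 + 1) + 2"
      using parent_edges_at[OF assms] cycle_edges_at[OF assms] True unfolding thin_def by linarith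
    finally show ?thesis using b3 by simp
  next
    case False
    then have "{e \<in> graph_edges. v \<in> e} = {e \<in> parent_edges. v \<in> e}"
      using cycle_edges_at_non_thin[OF assms] split by auto
    then have "degree graph_edges v \<le> 1 + length (children b n v)"
      unfolding degree_def using parent_edges_at[OF assms] by simp
    then show ?thesis using length_children[of b n v] by simp
  qed
qed

text \<open>Each cycle edge outside the tree comes from a break of the tour or from the
  wrap-around pair.\<close>
lemma card_cycle_edges_outside_tree:
  "card (cycle_edges - parent_edges) \<le> breaks (tree_adj b) cyc + 1"
proof -
  define B where "B = {i. Suc i < length cyc \<and> \<not> tree_adj b (cyc ! i) (cyc ! Suc i)}"
  have "cycle_edges - parent_edges \<subseteq> (\<lambda>i. {cyc ! i, cyc ! ((i + 1) mod n)}) ` insert (n - 1) B"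
  proof
    fix e assume "e \<in> cycle_edges - parent_edges"
    then obtain i where i: "i < n" "e = {cyc ! i, cyc ! ((i + 1) mod n)}" "e \<notin> parent_edges"
      unfolding cycle_edges_def by auto
    have "(i + 1) mod n < n" using n3 by simp
    then have "\<not> tree_adj b (cyc ! i) (cyc ! ((i + 1) mod n))"
      using tree_adj_parent_edge cyc_nth i by blast
    then have "i \<in> insert (n - 1) B"
      using i(1) cyc_length unfolding B_def by (cases "i + 1 < n") auto
    then show "e \<in> (\<lambda>i. {cyc ! i, cyc ! ((i + 1) mod n)}) ` insert (n - 1) B" using i by blast
  qed
  moreover have fin: "finite (insert (n - 1) B)"
    unfolding B_def by (rule finite_insert[THEN iffD2], rule finite_subset[of _ "{..<length cyc}"]) auto
  ultimately have "card (cycle_edges - parent_edges) \<le> card ((\<lambda>i. {cyc ! i, cyc ! ((i + 1) mod n)}) ` insert (n - 1) B)"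
    by (intro card_mono) auto
  also have "\<dots> \<le> card (insert (n - 1) B)" using fin by (rule card_image_le)
  also have "\<dots> \<le> card B + 1" using fin by (simp add: card_insert_if)
  also have "\<dots> \<le> breaks (tree_adj b) cyc + 1" using card_breaks unfolding B_def by simp
  finally show ?thesis .
qed

lemma marks_cyc: "marks b cyc = marked_count b n"
proof -
  have "length (filter (marked b) cyc) = card ({x. marked b x} \<inter> set cyc)"
    by (rule distinct_length_filter[OF cyc_distinct])
  moreover have "{x. marked b x} \<inter> set cyc = {u \<in> {1..n}. marked b u}" unfolding cyc_set by blast
  ultimately show ?thesis unfolding marks_def marked_count_def by simp
qed

text \<open>The edge count: a spanning tree plus at most one edge per marked vertex.\<close>
lemma card_graph_edges: "card graph_edges \<le> (n - 1) + marked_count b n"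
proof -
  have "graph_edges = parent_edges \<union> (cycle_edges - parent_edges)" by (auto simp: graph_edges_def)
  then have "card graph_edges \<le> card parent_edges + card (cycle_edges - parent_edges)"
    using card_Un_le[of parent_edges "cycle_edges - parent_edges"] by simp
  moreover have "breaks (tree_adj b) cyc + 1 \<le> marks b cyc"
    using tour_breaks[OF b1, of 1 True n] marked_root by simp
  ultimately show ?thesis
    using card_parent_edges card_cycle_edges_outside_tree marks_cyc by linarith
qed

lemma simple: "simple_graph {1..n} graph_edges"
  unfolding simple_graph_def
proof (intro conjI ballI)
  show "finite {1..n}" by simp
  fix e assume "e \<in> graph_edges"
  then show "\<exists>u v. u \<in> {1..n} \<and> v \<in> {1..n} \<and> u \<noteq> v \<and> e = {u, v}"
    unfolding graph_edges_def
  proof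
    assume "e \<in> parent_edges"
    then obtain j where j: "j \<in> {2..n}" "e = {parent b j, j}" unfolding parent_edges_def by auto
    then have "parent b j < j" "1 \<le> parent b j" using parent_lt parent_ge1 by auto
    then show ?thesis using j by (intro exI[of _ "parent b j"] exI[of _ j]) auto
  next
    assume "e \<in> cycle_edges"
    then obtain i where i: "i < n" "e = {cyc ! i, cyc ! ((i + 1) mod n)}" unfolding cycle_edges_def by auto
    have next_i: "(i + 1) mod n < n" "i \<noteq> (i + 1) mod n" using i(1) n3 by (auto simp: mod_if)
    then have "cyc ! i \<noteq> cyc ! ((i + 1) mod n)"
      using nth_eq_iff_index_eq[OF cyc_distinct] i(1) cyc_length by simp
    then show ?thesis using i cyc_nth next_i by blast
  qed
qed

lemma hamiltonian: "hamiltonian {1..n} graph_edges"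
  unfolding hamiltonian_def
proof (intro exI[of _ cyc] conjI allI impI)
  show "distinct cyc" "set cyc = {1..n}" "3 \<le> length cyc" using cyc_distinct cyc_set cyc_length n3 by auto
  fix i assume "i < length cyc"
  then show "{cyc ! i, cyc ! ((i + 1) mod length cyc)} \<in> graph_edges"
    using cyc_length by (auto simp: graph_edges_def cycle_edges_def)
qed

end


section \<open>Walks and distances\<close>

definition has_walk :: "'a set set \<Rightarrow> 'a \<Rightarrow> 'a \<Rightarrow> nat \<Rightarrow> bool" where
  "has_walk E u v k \<longleftrightarrow> (\<exists>xs. is_walk E xs \<and> hd xs = u \<and> last xs = v \<and> length xs = k + 1)"

lemma gdist_has_walk: "gdist E u v = (LEAST k. has_walk E u v k)"
  unfolding gdist_def has_walk_def ..

lemma gdist_le: "has_walk E u v k \<Longrightarrow> gdist E u v \<le> k"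
  unfolding gdist_has_walk by (rule Least_le)

lemma has_walk_refl: "has_walk E u u 0"
  unfolding has_walk_def by (rule exI[of _ "[u]"]) (simp add: is_walk_def)

lemma has_walk_snoc:
  assumes "has_walk E u v k" "{v, w} \<in> E"
  shows "has_walk E u w (k + 1)"
proof -
  obtain xs where xs: "is_walk E xs" "hd xs = u" "last xs = v" "length xs = k + 1"
    using assms(1) unfolding has_walk_def by blast
  have ne: "xs \<noteq> []" using xs(4) by auto
  have "is_walk E (xs @ [w])" unfolding is_walk_def
  proof (intro conjI allI impI)
    fix i assume i: "i + 1 < length (xs @ [w])"
    show "{(xs @ [w]) ! i, (xs @ [w]) ! (i + 1)} \<in> E"
    proof (cases "i + 1 < length xs")
      case True
      then show ?thesis using xs(1) unfolding is_walk_def by (simp add: nth_append)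
    next
      case False
      then have "i = length xs - 1" using i by simp
      then have "(xs @ [w]) ! i = v" "(xs @ [w]) ! (i + 1) = w"
        using xs(3) ne by (auto simp: nth_append last_conv_nth)
      then show ?thesis using assms(2) by simp
    qed
  qed simp
  then show ?thesis unfolding has_walk_def using xs ne by (intro exI[of _ "xs @ [w]"]) auto
qed

lemma has_walk_cons:
  assumes "has_walk E v w k" "{u, v} \<in> E"
  shows "has_walk E u w (k + 1)"
proof -
  obtain xs where xs: "is_walk E xs" "hd xs = v" "last xs = w" "length xs = k + 1"
    using assms(1) unfolding has_walk_def by blast
  have "is_walk E (u # xs)" unfolding is_walk_def
  proof (intro conjI allI impI)
    fix i assume i: "i + 1 < length (u # xs)"
    show "{(u # xs) ! i, (u # xs) ! (i + 1)} \<in> E"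
    proof (cases i)
      case 0
      have "xs \<noteq> []" using xs(4) by auto
      then show ?thesis using assms(2) xs(2) 0 by (simp add: hd_conv_nth)
    next
      case (Suc j)
      then show ?thesis using xs(1) i unfolding is_walk_def by simp
    qed
  qed simp
  then show ?thesis unfolding has_walk_def using xs by (intro exI[of _ "u # xs"]) auto
qed

function depth :: "nat \<Rightarrow> nat \<Rightarrow> nat" where
  "depth b v = (if v \<le> 1 then 0 else 1 + depth b (parent b v))"
  by auto
termination
  by (relation "measure snd") (auto intro: parent_lt)

declare depth.simps[simp del]

lemma depth_root: "depth b 1 = 0"
  by (simp add: depth.simps)

lemma depth_step: "2 \<le> v \<Longrightarrow> depth b v = 1 + depth b (parent b v)"
  by (subst depth.simps) simp

lemma depth_mono: "1 \<le> u \<Longrightarrow> u \<le> v \<Longrightarrow> depth b u \<le> depth b v"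
proof (induction v arbitrary: u rule: less_induct)
  case (less v)
  show ?case
  proof (cases "u \<le> 1")
    case True then show ?thesis using less.prems by (simp add: depth.simps)
  next
    case False
    then have "2 \<le> u" "2 \<le> v" using less.prems by auto
    moreover have "depth b (parent b u) \<le> depth b (parent b v)"
      using less.IH[OF parent_lt[OF \<open>2 \<le> v\<close>] parent_ge1 parent_mono[OF less.prems(2)]] .
    ultimately show ?thesis by (simp add: depth_step)
  qed
qed

context tour_construction
begin

lemma has_walk_to_root:
  "parent_edges \<subseteq> E \<Longrightarrow> 1 \<le> v \<Longrightarrow> v \<le> n \<Longrightarrow> has_walk E v 1 (depth b v)"
proof (induction v rule: less_induct)
  case (less v)
  show ?case
  proof (cases "v = 1")
    case True then show ?thesis using has_walk_refl depth_root by simp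
  next
    case False
    then have v: "2 \<le> v" using less.prems by simp
    have "parent b v < v" "1 \<le> parent b v" using parent_lt[OF v] parent_ge1 by auto
    then have "has_walk E (parent b v) 1 (depth b (parent b v))" using less by simp
    moreover have "{v, parent b v} \<in> E" using less.prems v unfolding parent_edges_def by (auto simp: insert_commute)
    ultimately show ?thesis using has_walk_cons depth_step[OF v] by fastforce
  qed
qed

lemma has_walk_from_root:
  "parent_edges \<subseteq> E \<Longrightarrow> 1 \<le> v \<Longrightarrow> v \<le> n \<Longrightarrow> has_walk E w 1 k \<Longrightarrow> has_walk E w v (k + depth b v)"
proof (induction v rule: less_induct)
  case (less v)
  show ?case
  proof (cases "v = 1")
    case True then show ?thesis using less.prems depth_root by simp
  next
    case False
    then have v: "2 \<le> v" using less.prems by simp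
    have "parent b v < v" "1 \<le> parent b v" using parent_lt[OF v] parent_ge1 by auto
    then have "has_walk E w (parent b v) (k + depth b (parent b v))" using less by simp
    moreover have "{parent b v, v} \<in> E" using less.prems v unfolding parent_edges_def by auto
    ultimately show ?thesis using has_walk_snoc depth_step[OF v] by fastforce
  qed
qed

lemma gdist_via_root:
  assumes "parent_edges \<subseteq> E" "u \<in> {1..n}" "v \<in> {1..n}"
  shows "gdist E u v \<le> depth b u + depth b v"
  using assms has_walk_from_root[OF assms(1) _ _ has_walk_to_root[OF assms(1)]] by (auto intro: gdist_le)

lemma depth_along_tree_walk:
  assumes "is_walk parent_edges ws" "hd ws = 1"
  shows "i < length ws \<Longrightarrow> depth b (ws ! i) \<le> i"
proof (induction i)
  case 0 then show ?case using assms by (simp add: hd_conv_nth[symmetric] depth.simps is_walk_def)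
next
  case (Suc i)
  have "{ws ! i, ws ! (i + 1)} \<in> parent_edges" using assms(1) Suc.prems unfolding is_walk_def by simp
  then obtain j where j: "j \<in> {2..n}" "{ws ! i, ws ! (i + 1)} = {parent b j, j}"
    unfolding parent_edges_def by auto
  then have "depth b (ws ! (i + 1)) \<le> depth b (ws ! i) + 1"
    using depth_step[of j b] by (auto simp: doubleton_eq_iff)
  then show ?case using Suc by simp
qed

lemma depth_le_gdist: "depth b n \<le> gdist parent_edges 1 n"
proof -
  have "has_walk parent_edges 1 n (depth b n)"
    using has_walk_from_root[OF subset_refl _ _ has_walk_refl, of n] n3 by simp
  then have "has_walk parent_edges 1 n (gdist parent_edges 1 n)"
    unfolding gdist_has_walk by (rule LeastI)
  then obtain ws where ws: "is_walk parent_edges ws" "hd ws = 1" "last ws = n"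
    "length ws = gdist parent_edges 1 n + 1"
    unfolding has_walk_def by blast
  have "ws \<noteq> []" using ws(4) by auto
  then have "ws ! gdist parent_edges 1 n = last ws" using ws(4) by (simp add: last_conv_nth)
  then show ?thesis using depth_along_tree_walk[OF ws(1,2), of "gdist parent_edges 1 n"] ws(3,4) by simp
qed

lemma tree_edges_eq: "tree_edges n (b + 1) = parent_edges"
proof
  show "tree_edges n (b + 1) \<subseteq> parent_edges"
  proof
    fix e assume "e \<in> tree_edges n (b + 1)"
    then obtain i j where ij: "e = {i, j}" "1 \<le> i" "i \<le> n" "b * (i - 1) + 2 \<le> j" "j \<le> b * i + 1" "j \<le> n"
      unfolding tree_edges_def by auto
    then have "j \<in> set (children b n i)" by (auto simp: children_def)
    then have "2 \<le> j \<and> j \<le> n \<and> parent b j = i" using children_iff[OF b1 ij(2)] by blast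
    then show "e \<in> parent_edges" unfolding parent_edges_def using ij(1) by auto
  qed
  show "parent_edges \<subseteq> tree_edges n (b + 1)"
  proof
    fix e assume "e \<in> parent_edges"
    then obtain j where j: "j \<in> {2..n}" "e = {parent b j, j}" unfolding parent_edges_def by auto
    then have "j \<in> set (children b n (parent b j))" using children_iff[OF b1 parent_ge1] by simp
    then have "b * (parent b j - 1) + 2 \<le> j" "j \<le> b * parent b j + 1" by (auto simp: children_def)
    moreover have "parent b j \<le> n" using parent_le[of j b] j by simp
    ultimately show "e \<in> tree_edges n (b + 1)" unfolding tree_edges_def using j parent_ge1
      by (intro CollectI exI[of _ "parent b j"] exI[of _ j]) auto
  qed
qed

lemma depth_le_height: "depth b n \<le> tree_height n (b + 1)"
proof -
  have "finite ((\<lambda>v. gdist (tree_edges n (b + 1)) 1 v) ` {1..n})" by simp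
  moreover have "{gdist (tree_edges n (b + 1)) 1 v | v. v \<in> {1..n}} = (\<lambda>v. gdist (tree_edges n (b + 1)) 1 v) ` {1..n}"
    by auto
  ultimately have "gdist (tree_edges n (b + 1)) 1 n \<le> tree_height n (b + 1)"
    unfolding tree_height_def using n3 by (auto intro: Max_ge)
  then show ?thesis using depth_le_gdist tree_edges_eq by simp
qed

lemma diameter_bound:
  assumes "parent_edges \<subseteq> E"
  shows "diameter {1..n} E \<le> 2 * tree_height n (b + 1)"
proof -
  let ?D = "{gdist E u v | u v. u \<in> {1..n} \<and> v \<in> {1..n}}"
  have "?D \<subseteq> (\<lambda>(u, v). gdist E u v) ` ({1..n} \<times> {1..n})" by blast
  then have fin: "finite ?D" by (rule finite_subset) simp
  have ne: "?D \<noteq> {}" using n3 by (auto intro!: exI[of _ 1])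
  have "x \<le> 2 * depth b n" if x: "x \<in> ?D" for x
  proof -
    obtain u v where uv: "x = gdist E u v" "u \<in> {1..n}" "v \<in> {1..n}" using x by blast
    then have "x \<le> depth b u + depth b v" using gdist_via_root[OF assms] by simp
    moreover have "depth b u \<le> depth b n" "depth b v \<le> depth b n" using depth_mono uv by auto
    ultimately show ?thesis by simp
  qed
  then have "diameter {1..n} E \<le> 2 * depth b n" unfolding diameter_def using Max_le_iff[OF fin ne] by blast
  then show ?thesis using depth_le_height by simp
qed

end


lemma edge_bound_arith:
  fixes B N F L C :: real
  assumes B: "B \<ge> 3"
    and edges: "C \<le> N - 1 + F"
    and excess: "(B + 1) * F - (B - 1) * N \<le> (2 * B - 4) * L + 2"
    and levels: "(2 * B - 4) * L \<le> (B - 1) * N / B^3 + (5 * B - 6) * (B + 1) / 2"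
  shows "C \<le> (2 - 1 / B - (B - 1)^2 / B^3) * N + (B - 2) / 2 + 2 * (B - 1)"
proof -
  have pos: "B > 0" "B + 1 > 0" using B by auto
  have "(B + 1) * (N - 1 + F) \<le> (B + 1) * (N - 1) + (B - 1) * N + (B - 1) * N / B^3 + (5 * B - 6) * (B + 1) / 2 + 2"
    using excess levels by (simp add: algebra_simps)
  also have "\<dots> \<le> (B + 1) * ((2 - 1 / B - (B - 1)^2 / B^3) * N + (B - 2) / 2 + 2 * (B - 1))"
    using pos B by (simp add: field_simps power2_eq_square power3_eq_cube)
  finally have "N - 1 + F \<le> (2 - 1 / B - (B - 1)^2 / B^3) * N + (B - 2) / 2 + 2 * (B - 1)"
    using pos(2) by (simp only: mult_le_cancel_left_pos)
  then show ?thesis using edges by linarith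
qed

lemma (in tour_construction) card_graph_edges_bound:
  "real (card graph_edges) \<le> (2 - 1 / real b - (real b - 1)^2 / real b^3) * real n + (real b - 2) / 2 + 2 * (real b - 1)"
proof (rule edge_bound_arith)
  show "real b \<ge> 3" using b3 by simp
  show "real (card graph_edges) \<le> real n - 1 + real (marked_count b n)"
    using card_graph_edges n3 by (simp add: of_nat_diff flip: of_nat_le_iff)
  have "real_of_int (marked_excess b n) \<le> real_of_int ((2 * int b - 4) * int (levels b n) + 2)"
    using marked_excess_bound[OF b3, of n] by (simp only: of_int_le_iff)
  then show "(real b + 1) * real (marked_count b n) - (real b - 1) * real n \<le> (2 * real b - 4) * real (levels b n) + 2"
    by (simp add: marked_excess_def)
  show "(2 * real b - 4) * real (levels b n) \<le> (real b - 1) * real n / real b^3 + (5 * real b - 6) * (real b + 1) / 2"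
    using levels_bound[OF b3] .
qed

theorem mainTheorem7:
  fixes \<Delta> n :: nat
  assumes "\<Delta> \<ge> 4" and "n \<ge> 3"
  shows "\<exists>E :: nat set set. simple_graph {1..n} E \<and> hamiltonian {1..n} E \<and>
    (\<forall>v\<in>{1..n}. degree E v \<le> \<Delta>) \<and>
    diameter {1..n} E \<le> 2 * tree_height n \<Delta> \<and>
    real (card E) \<le> (2 - 1 / (real \<Delta> - 1) - (real \<Delta> - 2)^2 / (real \<Delta> - 1)^3) * real n
      + (real \<Delta> - 3) / 2 + 2 * (real \<Delta> - 2)"
proof -
  define b where "b = \<Delta> - 1"
  have \<Delta>: "\<Delta> = b + 1" "real \<Delta> - 1 = real b" "real \<Delta> - 2 = real b - 1" "real \<Delta> - 3 = real b - 2"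
    using assms(1) unfolding b_def by auto
  interpret tour_construction b n
    using assms unfolding b_def by unfold_locales auto
  have "diameter {1..n} graph_edges \<le> 2 * tree_height n \<Delta>"
    using diameter_bound[of graph_edges] \<Delta>(1) by (simp add: graph_edges_def)
  moreover have "\<forall>v\<in>{1..n}. degree graph_edges v \<le> \<Delta>"
    using degree_bound \<Delta>(1) by simp
  ultimately show ?thesis
    using simple hamiltonian card_graph_edges_bound unfolding \<Delta>(2-4) by blast
qed

end
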